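(* Let $z\ge0$ be an integer. If an undirected multigraph $G$ has a $z$-antler $(C_1,F_1)$ and an antler $(C_2,F_2)$, then $(C_1\setminus(C_2\cup F_2),\,F_1\setminus(C_2\cup F_2))$ is a $z$-antler in $G-(C_2\cup F_2)$.
   Context: A feedback vertex set (FVS) of $G$ is a set $X\subseteq V(G)$ with $G-X$ acyclic (self-loops and pairs of parallel edges count as cycles); $\mathrm{fvs}(G)$ is its minimum size. For disjoint $X,Y$, $e(X,Y)$ is the number of edges between $X$ and $Y$. A feedback vertex cut (FVC) in $G$ is a pair of disjoint sets $C,F\subseteq V(G)$ such that $G[F]$ is a forest and every tree $T$ of $G[F]$ satisfies $e(V(T),V(G)\setminus(C\cup F))\le1$. An antler is a FVC $(C,F)$ with $|C|\le\mathrm{fvs}(G[C\cup F])$. For $C\subseteq V(G)$, a $C$-certificate is a subgraph $H$ of $G$ such that $C$ is a minimum FVS of $H$; it has order $z$ if every component $H'$ of $H$ satisfies $\mathrm{fvs}(H')=|C\cap V(H')|\le z$. A $z$-antler is an antler $(C,F)$ such that $G[C\cup F]$ contains a $C$-certificate of order $z$. *)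

theory Defs
  imports Main
begin

text \<open>Finite undirected multigraphs with explicit edge identities (allowing
self-loops and parallel edges). An edge e has endpoints fst (ends G e) and
snd (ends G e); the orientation is irrelevant.\<close>

record ('a, 'e) mgraph =
  verts :: "'a set"
  edges :: "'e set"
  ends  :: "'e \<Rightarrow> 'a \<times> 'a"

definition wf_mgraph :: "('a, 'e) mgraph \<Rightarrow> bool" where
  "wf_mgraph G \<longleftrightarrow> finite (verts G) \<and> finite (edges G) \<and>
     (\<forall>e\<in>edges G. fst (ends G e) \<in> verts G \<and> snd (ends G e) \<in> verts G)"

definition joins :: "('a, 'e) mgraph \<Rightarrow> 'e \<Rightarrow> 'a \<Rightarrow> 'a \<Rightarrow> bool" where
  "joins G e u v \<longleftrightarrow> ends G e = (u, v) \<or> ends G e = (v, u)"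

text \<open>A cycle: distinct vertices v0..v(k-1), k \<ge> 1, and distinct edges e0..e(k-1),
 where e_i joins v_i and v_(i+1 mod k). k = 1 is a self-loop, k = 2 a pair of
 parallel edges.\<close>
definition has_cycle :: "('a, 'e) mgraph \<Rightarrow> bool" where
  "has_cycle G \<longleftrightarrow> (\<exists>vs es. length vs = length es \<and> 1 \<le> length vs \<and>
      distinct vs \<and> distinct es \<and> set vs \<subseteq> verts G \<and> set es \<subseteq> edges G \<and>
      (\<forall>i < length vs. joins G (es ! i) (vs ! i) (vs ! ((i + 1) mod length vs))))"

definition forest :: "('a, 'e) mgraph \<Rightarrow> bool" where
  "forest G \<longleftrightarrow> \<not> has_cycle G"

definition induced :: "('a, 'e) mgraph \<Rightarrow> 'a set \<Rightarrow> ('a, 'e) mgraph" where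
  "induced G X = \<lparr> verts = verts G \<inter> X,
     edges = {e \<in> edges G. fst (ends G e) \<in> X \<and> snd (ends G e) \<in> X},
     ends = ends G \<rparr>"

definition del_verts :: "('a, 'e) mgraph \<Rightarrow> 'a set \<Rightarrow> ('a, 'e) mgraph" where
  "del_verts G X = induced G (verts G - X)"

definition subgraph :: "('a, 'e) mgraph \<Rightarrow> ('a, 'e) mgraph \<Rightarrow> bool" where
  "subgraph H G \<longleftrightarrow> verts H \<subseteq> verts G \<and> edges H \<subseteq> edges G \<and> ends H = ends G \<and>
     (\<forall>e\<in>edges H. fst (ends H e) \<in> verts H \<and> snd (ends H e) \<in> verts H)"

definition is_fvs :: "('a, 'e) mgraph \<Rightarrow> 'a set \<Rightarrow> bool" where
  "is_fvs G X \<longleftrightarrow> X \<subseteq> verts G \<and> forest (del_verts G X)"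

definition fvs :: "('a, 'e) mgraph \<Rightarrow> nat" where
  "fvs G = (LEAST n. \<exists>X. is_fvs G X \<and> card X = n)"

definition min_fvs :: "('a, 'e) mgraph \<Rightarrow> 'a set \<Rightarrow> bool" where
  "min_fvs G X \<longleftrightarrow> is_fvs G X \<and> card X = fvs G"

definition n_edges_between :: "('a, 'e) mgraph \<Rightarrow> 'a set \<Rightarrow> 'a set \<Rightarrow> nat" where
  "n_edges_between G X Y = card {e \<in> edges G.
      (fst (ends G e) \<in> X \<and> snd (ends G e) \<in> Y) \<or> (fst (ends G e) \<in> Y \<and> snd (ends G e) \<in> X)}"

definition adj :: "('a, 'e) mgraph \<Rightarrow> ('a \<times> 'a) set" where
  "adj G = {(u, v). \<exists>e\<in>edges G. joins G e u v}"

definition components :: "('a, 'e) mgraph \<Rightarrow> 'a set set" where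
  "components G = (\<lambda>u. {v \<in> verts G. (u, v) \<in> (adj G)\<^sup>*}) ` verts G"

definition FVC :: "('a, 'e) mgraph \<Rightarrow> 'a set \<Rightarrow> 'a set \<Rightarrow> bool" where
  "FVC G C F \<longleftrightarrow> C \<subseteq> verts G \<and> F \<subseteq> verts G \<and> C \<inter> F = {} \<and>
     forest (induced G F) \<and>
     (\<forall>T \<in> components (induced G F). n_edges_between G T (verts G - (C \<union> F)) \<le> 1)"

definition antler :: "('a, 'e) mgraph \<Rightarrow> 'a set \<Rightarrow> 'a set \<Rightarrow> bool" where
  "antler G C F \<longleftrightarrow> FVC G C F \<and> card C \<le> fvs (induced G (C \<union> F))"

definition certificate :: "('a, 'e) mgraph \<Rightarrow> 'a set \<Rightarrow> nat \<Rightarrow> bool" where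
  "certificate H C z \<longleftrightarrow> min_fvs H C \<and>
     (\<forall>K \<in> components H. fvs (induced H K) = card (C \<inter> K) \<and> card (C \<inter> K) \<le> z)"

definition z_antler :: "('a, 'e) mgraph \<Rightarrow> nat \<Rightarrow> 'a set \<Rightarrow> 'a set \<Rightarrow> bool" where
  "z_antler G z C F \<longleftrightarrow> antler G C F \<and>
     (\<exists>H. subgraph H (induced G (C \<union> F)) \<and> certificate H C z)"

end

theory Submission
  imports Defs
begin

text \<open>
A cycle of G that avoids the head C of a feedback vertex cut (C, F) also avoids F: otherwise it
enters a tree T of G[F] and leaves it along two distinct edges, whose far endpoints lie outside
C \<union> F, contradicting e(T, V(G) - (C \<union> F)) \<le> 1. Consequently deleting S = C2 \<union> F2 keeps
(C1 - S, F1 - S) a feedback vertex cut, and any feedback vertex set X of H - S, for a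
C1-certificate H, extends by C2 \<inter> V(H) to one of H. Since C2 - (C1 \<union> F1) together with
C1 \<inter> S meets every cycle of G[S], the antler inequality |C2| \<le> fvs G[S] yields
|C2 \<inter> (C1 \<union> F1)| \<le> |C1 \<inter> S|, whence |C1 - S| \<le> |X|. So C1 - S is a minimum feedback vertex
set of H - S, and minimum feedback vertex sets split exactly over components.
\<close>

definition is_cycle :: "('a, 'e) mgraph \<Rightarrow> 'a list \<Rightarrow> 'e list \<Rightarrow> bool" where
  "is_cycle G vs es \<longleftrightarrow> length vs = length es \<and> 1 \<le> length vs \<and>
      distinct vs \<and> distinct es \<and> set vs \<subseteq> verts G \<and> set es \<subseteq> edges G \<and>
      (\<forall>i < length vs. joins G (es ! i) (vs ! i) (vs ! ((i + 1) mod length vs)))"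

lemma forest_iff_no_cycle: "forest G \<longleftrightarrow> (\<forall>vs es. \<not> is_cycle G vs es)"
  unfolding forest_def has_cycle_def is_cycle_def by blast

lemma induced_simps [simp]:
  "verts (induced G X) = verts G \<inter> X"
  "edges (induced G X) = {e \<in> edges G. fst (ends G e) \<in> X \<and> snd (ends G e) \<in> X}"
  "ends (induced G X) = ends G"
  unfolding induced_def by auto

lemma del_verts_simps [simp]:
  "verts (del_verts G X) = verts G - X"
  "edges (del_verts G X) =
     {e \<in> edges G. fst (ends G e) \<in> verts G - X \<and> snd (ends G e) \<in> verts G - X}"
  "ends (del_verts G X) = ends G"
  unfolding del_verts_def by auto

lemma induced_del_verts: "induced (del_verts G S) (X - S) = del_verts (induced G X) S"
  unfolding induced_def del_verts_def by auto

lemma subgraph_induced: "wf_mgraph G \<Longrightarrow> subgraph (induced G X) G"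
  unfolding subgraph_def wf_mgraph_def by auto

lemma subgraph_trans: "subgraph A B \<Longrightarrow> subgraph B C \<Longrightarrow> subgraph A C"
  unfolding subgraph_def by auto

lemma subgraph_del_verts_mono: "subgraph H G \<Longrightarrow> subgraph (del_verts H S) (del_verts G S)"
  unfolding subgraph_def by auto

lemma joins_sym: "joins G e u v \<longleftrightarrow> joins G e v u"
  unfolding joins_def by auto

lemma joins_ends: "joins G e (fst (ends G e)) (snd (ends G e))"
  unfolding joins_def by simp

lemma is_cycle_verts: "is_cycle G vs es \<Longrightarrow> set vs \<subseteq> verts G"
  unfolding is_cycle_def by auto

lemma is_cycle_edge:
  assumes "is_cycle G vs es" "i < length vs"
  shows "es ! i \<in> edges G" "joins G (es ! i) (vs ! i) (vs ! ((i + 1) mod length vs))"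
  using assms unfolding is_cycle_def by (auto intro: nth_mem)

lemma is_cycle_edge_ends:
  assumes "is_cycle G vs es" "e \<in> set es"
  shows "fst (ends G e) \<in> set vs \<and> snd (ends G e) \<in> set vs"
proof -
  have len: "length es = length vs" "0 < length vs" using assms(1) unfolding is_cycle_def by auto
  obtain i where i: "i < length vs" "e = es ! i" using assms(2) len by (auto simp: in_set_conv_nth)
  have "vs ! i \<in> set vs" "vs ! ((i + 1) mod length vs) \<in> set vs" using i len by auto
  then show ?thesis using is_cycle_edge(2)[OF assms(1) i(1)] i(2) unfolding joins_def by auto
qed

lemma is_cycle_induced: "is_cycle (induced G X) vs es \<longleftrightarrow> is_cycle G vs es \<and> set vs \<subseteq> X"
proof
  assume c: "is_cycle G vs es \<and> set vs \<subseteq> X"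
  have "e \<in> edges (induced G X)" if "e \<in> set es" for e
    using c is_cycle_edge_ends[OF _ that] that unfolding is_cycle_def by auto
  with c show "is_cycle (induced G X) vs es"
    unfolding is_cycle_def joins_def by auto
qed (auto simp: is_cycle_def joins_def)

lemma is_cycle_del_verts:
  "is_cycle (del_verts G X) vs es \<longleftrightarrow> is_cycle G vs es \<and> set vs \<inter> X = {}"
  unfolding del_verts_def is_cycle_induced using is_cycle_verts by blast

lemma is_cycle_subgraph: "subgraph H G \<Longrightarrow> is_cycle H vs es \<Longrightarrow> is_cycle G vs es"
  unfolding subgraph_def is_cycle_def joins_def by auto

lemma forest_subgraph: "subgraph H G \<Longrightarrow> forest G \<Longrightarrow> forest H"
  using is_cycle_subgraph forest_iff_no_cycle by metis

lemma mod_succ_closed: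
  fixes n :: nat
  assumes "i < n" "P i" "\<And>k. k < n \<Longrightarrow> P k \<Longrightarrow> P ((k + 1) mod n)" "j < n"
  shows "P j"
proof -
  have "P ((i + m) mod n)" for m
  proof (induction m)
    case (Suc m)
    have "(i + Suc m) mod n = ((i + m) mod n + 1) mod n" by (simp add: mod_Suc_eq)
    then show ?case using Suc assms(1,3) by simp
  qed (use assms in simp)
  moreover have "(i + (j + n - i)) mod n = j" using assms(1,4) by simp
  ultimately show ?thesis by metis
qed

lemma is_cycle_crosses_twice:
  assumes c: "is_cycle G vs es" and "u \<in> set vs" "u \<in> T" "w \<in> set vs" "w \<notin> T"
  shows "2 \<le> card {e \<in> set es. (fst (ends G e) \<in> T) \<noteq> (snd (ends G e) \<in> T)}"
    (is "_ \<le> card ?X")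
proof -
  define n where "n = length vs"
  have len: "length es = n" "distinct es" using c unfolding is_cycle_def n_def by auto
  obtain i0 j0 where ij0: "i0 < n" "vs ! i0 \<in> T" "j0 < n" "vs ! j0 \<notin> T"
    using assms(2-5) unfolding n_def by (metis in_set_conv_nth)
  have crossing: "es ! k \<in> ?X" if "k < n" "(vs ! k \<in> T) \<noteq> (vs ! ((k + 1) mod n) \<in> T)" for k
    using is_cycle_edge[OF c, of k] that len unfolding joins_def n_def by auto
  obtain i where i: "i < n" "vs ! i \<in> T" "vs ! ((i + 1) mod n) \<notin> T"
    using mod_succ_closed[of i0 n "\<lambda>k. vs ! k \<in> T" j0] ij0 by blast
  obtain j where j: "j < n" "vs ! j \<notin> T" "vs ! ((j + 1) mod n) \<in> T"
    using mod_succ_closed[of j0 n "\<lambda>k. vs ! k \<notin> T" i0] ij0 by blast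
  have "es ! i \<noteq> es ! j" using i j len by (auto simp: nth_eq_iff_index_eq)
  moreover have "{es ! i, es ! j} \<subseteq> ?X" using crossing i j by auto
  moreover have "finite ?X" by simp
  ultimately show ?thesis using card_mono[of ?X "{es ! i, es ! j}"] by simp
qed

lemma component_closed:
  assumes "K \<in> components G" "u \<in> K" "e \<in> edges G" "joins G e u w" "w \<in> verts G"
  shows "w \<in> K"
proof -
  obtain r where K: "K = {v \<in> verts G. (r, v) \<in> (adj G)\<^sup>*}"
    using assms(1) unfolding components_def by auto
  have "(u, w) \<in> adj G" using assms(3,4) unfolding adj_def by auto
  then show ?thesis using assms(2,5) K by (auto intro: rtrancl_into_rtrancl)
qed

lemma is_cycle_within_component:
  assumes K: "K \<in> components G" and c: "is_cycle G vs es" and "u \<in> set vs" "u \<in> K"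
  shows "set vs \<subseteq> K"
proof (rule ccontr)
  assume "\<not> set vs \<subseteq> K"
  then obtain w where "w \<in> set vs" "w \<notin> K" by blast
  then have "2 \<le> card {e \<in> set es. (fst (ends G e) \<in> K) \<noteq> (snd (ends G e) \<in> K)}"
    using is_cycle_crosses_twice[OF c] assms(3,4) by blast
  then have "{e \<in> set es. (fst (ends G e) \<in> K) \<noteq> (snd (ends G e) \<in> K)} \<noteq> {}"
    by (metis card.empty not_numeral_le_zero)
  then obtain e where e: "e \<in> set es" "(fst (ends G e) \<in> K) \<noteq> (snd (ends G e) \<in> K)"
    by blast
  have "e \<in> edges G" using c e(1) unfolding is_cycle_def by auto
  moreover have "fst (ends G e) \<in> verts G" "snd (ends G e) \<in> verts G"
    using is_cycle_edge_ends[OF c e(1)] is_cycle_verts[OF c] by auto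
  ultimately show False
    using e(2) component_closed[OF K] joins_ends joins_sym by metis
qed

lemma component_subgraph:
  assumes "subgraph A B" "K' \<in> components A"
  shows "\<exists>K \<in> components B. K' \<subseteq> K"
proof -
  obtain r where r: "r \<in> verts A" "K' = {v \<in> verts A. (r, v) \<in> (adj A)\<^sup>*}"
    using assms(2) unfolding components_def by auto
  have "adj A \<subseteq> adj B" using assms(1) unfolding subgraph_def adj_def joins_def by auto
  then have "(adj A)\<^sup>* \<subseteq> (adj B)\<^sup>*" by (rule rtrancl_mono)
  moreover have "verts A \<subseteq> verts B" using assms(1) unfolding subgraph_def by auto
  ultimately have "K' \<subseteq> {v \<in> verts B. (r, v) \<in> (adj B)\<^sup>*}" using r by auto
  moreover have "{v \<in> verts B. (r, v) \<in> (adj B)\<^sup>*} \<in> components B"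
    unfolding components_def using r \<open>verts A \<subseteq> verts B\<close> by auto
  ultimately show ?thesis by blast
qed

lemma component_subset_verts: "K \<in> components G \<Longrightarrow> K \<subseteq> verts G"
  unfolding components_def by auto

lemma FVC_component_exit:
  assumes fvc: "FVC G C F" and T: "T \<in> components (induced G F)"
    and "a \<in> T" "e \<in> edges G" "joins G e a b" "b \<in> verts G" "b \<notin> C" "b \<notin> T"
  shows "b \<in> verts G - (C \<union> F)"
proof -
  have "b \<notin> F"
  proof
    assume "b \<in> F"
    moreover have "a \<in> F" using component_subset_verts[OF T] \<open>a \<in> T\<close> by auto
    ultimately have "e \<in> edges (induced G F)" "joins (induced G F) e a b"
      using assms(4,5) unfolding joins_def by auto
    then show False using component_closed[OF T \<open>a \<in> T\<close>] assms(6,8) \<open>b \<in> F\<close> by auto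
  qed
  then show ?thesis using assms(6,7) by auto
qed

lemma FVC_cycle_avoids_F:
  assumes wf: "wf_mgraph G" and fvc: "FVC G C F"
    and c: "is_cycle G vs es" and avoid: "set vs \<inter> C = {}"
  shows "set vs \<inter> F = {}"
proof (rule ccontr)
  assume "set vs \<inter> F \<noteq> {}"
  then obtain u where u: "u \<in> set vs" "u \<in> F" by blast
  define T where "T = {v \<in> verts (induced G F). (u, v) \<in> (adj (induced G F))\<^sup>*}"
  define Out where "Out = verts G - (C \<union> F)"
  have uV: "u \<in> verts G" using u is_cycle_verts[OF c] by auto
  have T: "T \<in> components (induced G F)" unfolding components_def T_def using u uV by auto
  have uT: "u \<in> T" unfolding T_def using u uV by auto
  show False
  proof (cases "set vs \<subseteq> T")
    case True
    then have "is_cycle (induced G F) vs es"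
      using c component_subset_verts[OF T] unfolding is_cycle_induced by auto
    then show False using fvc unfolding FVC_def forest_iff_no_cycle by blast
  next
    case False
    then obtain w where "w \<in> set vs" "w \<notin> T" by blast
    then have two: "2 \<le> card {e \<in> set es. (fst (ends G e) \<in> T) \<noteq> (snd (ends G e) \<in> T)}"
      (is "_ \<le> card ?X") using is_cycle_crosses_twice[OF c u(1) uT] by blast
    have "?X \<subseteq> {e \<in> edges G. (fst (ends G e) \<in> T \<and> snd (ends G e) \<in> Out) \<or>
                                (fst (ends G e) \<in> Out \<and> snd (ends G e) \<in> T)}"
    proof
      fix e assume e: "e \<in> ?X"
      have "joins G e (fst (ends G e)) (snd (ends G e))"
        "joins G e (snd (ends G e)) (fst (ends G e))"
        using joins_ends joins_sym by metis+
      moreover have "e \<in> edges G" "fst (ends G e) \<in> set vs" "snd (ends G e) \<in> set vs"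
        using e is_cycle_edge_ends[OF c] c unfolding is_cycle_def by auto
      ultimately show "e \<in> {e \<in> edges G. (fst (ends G e) \<in> T \<and> snd (ends G e) \<in> Out) \<or>
                                   (fst (ends G e) \<in> Out \<and> snd (ends G e) \<in> T)}"
        using e FVC_component_exit[OF fvc T] avoid is_cycle_verts[OF c] unfolding Out_def by blast
    qed
    then have "card ?X \<le> n_edges_between G T Out"
      unfolding n_edges_between_def using wf unfolding wf_mgraph_def by (intro card_mono) auto
    also have "\<dots> \<le> 1" using fvc T unfolding FVC_def Out_def by auto
    finally show False using two by simp
  qed
qed

lemma is_fvs_iff: "is_fvs G X \<longleftrightarrow> X \<subseteq> verts G \<and> (\<forall>vs es. is_cycle G vs es \<longrightarrow> set vs \<inter> X \<noteq> {})"
  unfolding is_fvs_def forest_iff_no_cycle is_cycle_del_verts by blast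

lemma fvs_le_card: "is_fvs G X \<Longrightarrow> fvs G \<le> card X"
  unfolding fvs_def by (rule Least_le) blast

lemma min_fvs_exists:
  assumes "finite (verts G)"
  shows "\<exists>X. min_fvs G X"
proof -
  have "is_fvs G (verts G)" unfolding is_fvs_iff
  proof (intro conjI allI impI)
    fix vs es assume c: "is_cycle G vs es"
    then have "vs \<noteq> []" unfolding is_cycle_def by auto
    then show "set vs \<inter> verts G \<noteq> {}" using is_cycle_verts[OF c] by (simp add: Int_absorb2)
  qed simp
  then have "\<exists>X. is_fvs G X \<and> card X = card (verts G)" by blast
  then show ?thesis
    unfolding min_fvs_def fvs_def by (rule LeastI[where P = "\<lambda>n. \<exists>X. is_fvs G X \<and> card X = n"])
qed

lemma min_fvsI:
  assumes "finite (verts G)" "is_fvs G C" "\<And>X. is_fvs G X \<Longrightarrow> card C \<le> card X"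
  shows "min_fvs G C"
  using assms min_fvs_exists[OF assms(1)] fvs_le_card unfolding min_fvs_def by (metis le_antisym)

lemma min_fvs_le_card: "min_fvs G C \<Longrightarrow> is_fvs G X \<Longrightarrow> card C \<le> card X"
  unfolding min_fvs_def using fvs_le_card by simp

lemma fvs_subgraph_mono:
  assumes "subgraph H G" "finite (verts G)"
  shows "fvs H \<le> fvs G"
proof -
  obtain Z where Z: "min_fvs G Z" using min_fvs_exists[OF assms(2)] by blast
  have "is_fvs H (Z \<inter> verts H)"
    using Z is_cycle_subgraph[OF assms(1)] is_cycle_verts
    unfolding min_fvs_def is_fvs_iff by blast
  then have "fvs H \<le> card (Z \<inter> verts H)" by (rule fvs_le_card)
  also have "\<dots> \<le> card Z"
    using Z assms(2) unfolding min_fvs_def is_fvs_def by (meson card_mono finite_subset inf_le1)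
  finally show ?thesis using Z unfolding min_fvs_def by simp
qed

lemma is_fvs_induced: "is_fvs G C \<Longrightarrow> is_fvs (induced G K) (C \<inter> K)"
  unfolding is_fvs_iff is_cycle_induced by auto

lemma is_fvs_del_verts: "is_fvs G C \<Longrightarrow> is_fvs (del_verts G S) (C - S)"
  unfolding is_fvs_iff is_cycle_del_verts by auto

lemma is_fvs_replace_component:
  assumes K: "K \<in> components G" and C: "is_fvs G C" and X: "is_fvs (induced G K) X"
  shows "is_fvs G ((C - K) \<union> X)"
  unfolding is_fvs_iff
proof (intro conjI allI impI)
  show "C - K \<union> X \<subseteq> verts G" using C X unfolding is_fvs_def by auto
next
  fix vs es assume c: "is_cycle G vs es"
  show "set vs \<inter> (C - K \<union> X) \<noteq> {}"
  proof (cases "set vs \<inter> K = {}")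
    case True
    then show ?thesis using C c unfolding is_fvs_iff by blast
  next
    case False
    then have "set vs \<subseteq> K" using is_cycle_within_component[OF K c] by blast
    then show ?thesis using X c unfolding is_fvs_iff is_cycle_induced by blast
  qed
qed

lemma min_fvs_component:
  assumes fin: "finite (verts G)" and C: "min_fvs G C" and K: "K \<in> components G"
  shows "fvs (induced G K) = card (C \<inter> K)"
proof (rule antisym)
  have CV: "is_fvs G C" "finite C"
    using C fin unfolding min_fvs_def is_fvs_def by (auto intro: finite_subset)
  show "fvs (induced G K) \<le> card (C \<inter> K)" by (rule fvs_le_card[OF is_fvs_induced[OF CV(1)]])
  obtain X where X: "min_fvs (induced G K) X" using min_fvs_exists[of "induced G K"] fin by auto
  have "card C \<le> card ((C - K) \<union> X)"
    using min_fvs_le_card[OF C is_fvs_replace_component[OF K CV(1)]] X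
    unfolding min_fvs_def by blast
  also have "\<dots> \<le> card (C - K) + card X" by (rule card_Un_le)
  finally show "card (C \<inter> K) \<le> fvs (induced G K)"
    using card_Int_Diff[OF CV(2), of K] X unfolding min_fvs_def by linarith
qed

lemma FVC_del_verts:
  assumes wf: "wf_mgraph G" and fvc: "FVC G C F"
  shows "FVC (del_verts G S) (C - S) (F - S)"
  unfolding FVC_def
proof (intro conjI ballI)
  show "C - S \<subseteq> verts (del_verts G S)" "F - S \<subseteq> verts (del_verts G S)" "(C - S) \<inter> (F - S) = {}"
    using fvc unfolding FVC_def by auto
  have sub: "subgraph (induced (del_verts G S) (F - S)) (induced G F)"
    unfolding subgraph_def by auto
  then show "forest (induced (del_verts G S) (F - S))"
    using forest_subgraph fvc unfolding FVC_def by blast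
  fix T' assume "T' \<in> components (induced (del_verts G S) (F - S))"
  then obtain T where T: "T \<in> components (induced G F)" "T' \<subseteq> T"
    using component_subgraph[OF sub] by blast
  have "n_edges_between (del_verts G S) T' (verts (del_verts G S) - ((C - S) \<union> (F - S)))
        \<le> n_edges_between G T (verts G - (C \<union> F))"
    unfolding n_edges_between_def using wf T(2) unfolding wf_mgraph_def
    by (intro card_mono) auto
  also have "\<dots> \<le> 1" using fvc T(1) unfolding FVC_def by blast
  finally show "n_edges_between (del_verts G S) T'
    (verts (del_verts G S) - ((C - S) \<union> (F - S))) \<le> 1" .
qed

lemma is_fvs_add_FVC_head:
  assumes wf: "wf_mgraph G" and H: "subgraph H G" and fvc: "FVC G C F"
    and X: "is_fvs (del_verts H (C \<union> F)) X"
  shows "is_fvs H (X \<union> (C \<inter> verts H))"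
  unfolding is_fvs_iff
proof (intro conjI allI impI)
  show "X \<union> (C \<inter> verts H) \<subseteq> verts H" using X unfolding is_fvs_def by auto
next
  fix vs es assume c: "is_cycle H vs es"
  show "set vs \<inter> (X \<union> (C \<inter> verts H)) \<noteq> {}"
  proof
    assume avoid: "set vs \<inter> (X \<union> (C \<inter> verts H)) = {}"
    then have "set vs \<inter> C = {}" using is_cycle_verts[OF c] by blast
    then have "set vs \<inter> (C \<union> F) = {}"
      using FVC_cycle_avoids_F[OF wf fvc is_cycle_subgraph[OF H c]] by blast
    then show False using X c avoid unfolding is_fvs_iff is_cycle_del_verts by blast
  qed
qed

lemma antler_head_overlap_le:
  assumes wf: "wf_mgraph G" and fvc1: "FVC G C1 F1" and ant2: "antler G C2 F2"
  shows "card (C2 \<inter> (C1 \<union> F1)) \<le> card (C1 \<inter> (C2 \<union> F2))"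
proof -
  let ?S = "C2 \<union> F2"
  have fvc2: "FVC G C2 F2" and C2: "card C2 \<le> fvs (induced G ?S)"
    using ant2 unfolding antler_def by auto
  have fin: "finite C2" using fvc2 wf unfolding FVC_def wf_mgraph_def by (auto intro: finite_subset)
  have "is_fvs (induced G ?S) ((C2 - (C1 \<union> F1)) \<union> (C1 \<inter> ?S))"
    unfolding is_fvs_iff
  proof (intro conjI allI impI)
    show "C2 - (C1 \<union> F1) \<union> C1 \<inter> ?S \<subseteq> verts (induced G ?S)"
      using fvc1 fvc2 unfolding FVC_def by auto
  next
    fix vs es assume "is_cycle (induced G ?S) vs es"
    then have c: "is_cycle G vs es" "set vs \<subseteq> ?S" unfolding is_cycle_induced by auto
    show "set vs \<inter> (C2 - (C1 \<union> F1) \<union> C1 \<inter> ?S) \<noteq> {}"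
    proof
      assume avoid: "set vs \<inter> (C2 - (C1 \<union> F1) \<union> C1 \<inter> ?S) = {}"
      then have "set vs \<inter> (C1 \<union> F1) = {}"
        using FVC_cycle_avoids_F[OF wf fvc1 c(1)] c(2) by blast
      then have "set vs \<subseteq> F2" using avoid c(2) by blast
      then have "is_cycle (induced G F2) vs es" using c(1) by (simp add: is_cycle_induced)
      then show False using fvc2 unfolding FVC_def forest_iff_no_cycle by blast
    qed
  qed
  then have "card C2 \<le> card (C2 - (C1 \<union> F1)) + card (C1 \<inter> ?S)"
    using C2 fvs_le_card card_Un_le order_trans by metis
  then show ?thesis using card_Int_Diff[OF fin, of "C1 \<union> F1"] by linarith
qed

lemma min_fvs_del_verts_antler:
  assumes wf: "wf_mgraph G" and H: "subgraph H (induced G (C1 \<union> F1))" and C1: "min_fvs H C1"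
    and fvc1: "FVC G C1 F1" and ant2: "antler G C2 F2"
  shows "min_fvs (del_verts H (C2 \<union> F2)) (C1 - (C2 \<union> F2))"
proof (rule min_fvsI)
  let ?S = "C2 \<union> F2"
  have HG: "subgraph H G" using subgraph_trans[OF H subgraph_induced[OF wf]] .
  have finH: "finite (verts H)"
    using HG wf unfolding subgraph_def wf_mgraph_def by (auto intro: finite_subset)
  then show "finite (verts (del_verts H ?S))" by simp
  show "is_fvs (del_verts H ?S) (C1 - ?S)" using C1 is_fvs_del_verts unfolding min_fvs_def by blast
  have finC1: "finite C1"
    using C1 finH unfolding min_fvs_def is_fvs_def by (auto intro: finite_subset)
  have finC2: "finite C2"
    using ant2 wf unfolding antler_def FVC_def wf_mgraph_def by (auto intro: finite_subset)
  fix X assume X: "is_fvs (del_verts H ?S) X"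
  have "card C1 \<le> card (X \<union> (C2 \<inter> verts H))"
    using min_fvs_le_card[OF C1 is_fvs_add_FVC_head[OF wf HG _ X]] ant2
    unfolding antler_def by blast
  also have "\<dots> \<le> card X + card (C2 \<inter> (C1 \<union> F1))"
  proof -
    have "C2 \<inter> verts H \<subseteq> C2 \<inter> (C1 \<union> F1)" using H unfolding subgraph_def by auto
    then have "card (C2 \<inter> verts H) \<le> card (C2 \<inter> (C1 \<union> F1))" using finC2 by (intro card_mono) auto
    then show ?thesis using card_Un_le[of X "C2 \<inter> verts H"] by linarith
  qed
  also have "\<dots> \<le> card X + card (C1 \<inter> ?S)"
    using antler_head_overlap_le[OF wf fvc1 ant2] by simp
  finally show "card (C1 - ?S) \<le> card X" using card_Int_Diff[OF finC1, of ?S] by linarith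
qed

lemma certificate_del_verts:
  assumes fin: "finite (verts H)" and cert: "certificate H C z"
    and C': "min_fvs (del_verts H S) (C - S)"
  shows "certificate (del_verts H S) (C - S) z"
  unfolding certificate_def
proof (intro conjI ballI C')
  fix K' assume K': "K' \<in> components (del_verts H S)"
  show "fvs (induced (del_verts H S) K') = card ((C - S) \<inter> K')"
    using min_fvs_component[OF _ C' K'] fin by simp
  obtain K where K: "K \<in> components H" "K' \<subseteq> K"
    using component_subgraph[OF _ K', of H] unfolding subgraph_def by auto
  have "finite C" using cert fin unfolding certificate_def min_fvs_def is_fvs_def
    by (auto intro: finite_subset)
  then have "card ((C - S) \<inter> K') \<le> card (C \<inter> K)" using K(2) by (intro card_mono) auto
  also have "\<dots> \<le> z" using cert K(1) unfolding certificate_def by blast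
  finally show "card ((C - S) \<inter> K') \<le> z" .
qed

theorem lemma10:
  fixes G :: "('a, 'e) mgraph" and z :: nat and C1 F1 C2 F2 :: "'a set"
  assumes "wf_mgraph G"
    and "z_antler G z C1 F1"
    and "antler G C2 F2"
  shows "z_antler (del_verts G (C2 \<union> F2)) z (C1 - (C2 \<union> F2)) (F1 - (C2 \<union> F2))"
proof -
  let ?S = "C2 \<union> F2" and ?G' = "del_verts G (C2 \<union> F2)"
  obtain H where H: "subgraph H (induced G (C1 \<union> F1))" and cert: "certificate H C1 z"
    and fvc1: "FVC G C1 F1" using assms(2) unfolding z_antler_def antler_def by blast
  have finH: "finite (verts H)" using H assms(1) unfolding subgraph_def wf_mgraph_def
    by (auto intro: finite_subset)
  have C1': "min_fvs (del_verts H ?S) (C1 - ?S)"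
    using min_fvs_del_verts_antler[OF assms(1) H _ fvc1 assms(3)] cert
    unfolding certificate_def by blast
  have H': "subgraph (del_verts H ?S) (induced ?G' ((C1 - ?S) \<union> (F1 - ?S)))"
    using subgraph_del_verts_mono[OF H] induced_del_verts[of G ?S "C1 \<union> F1"] by (simp add: Un_Diff)
  have "card (C1 - ?S) = fvs (del_verts H ?S)" using C1' unfolding min_fvs_def by simp
  also have "\<dots> \<le> fvs (induced ?G' ((C1 - ?S) \<union> (F1 - ?S)))"
    using fvs_subgraph_mono[OF H'] assms(1) unfolding wf_mgraph_def by simp
  finally have "antler ?G' (C1 - ?S) (F1 - ?S)"
    unfolding antler_def using FVC_del_verts[OF assms(1) fvc1] by blast
  then show ?thesis
    unfolding z_antler_def using H' certificate_del_verts[OF finH cert C1'] by blast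
qed

end
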